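(* Let $\mathit{VI}$ be a finite set of variables with $\#\mathit{VI}=n$ and $1\le k\le n$. For each $sh_1,sh_2\in\mathit{SH}$ and each $V\subseteq\mathit{VI}$: if $\rho_{\mathit{TSD}_k}(sh_1)=\rho_{\mathit{TSD}_k}(sh_2)$ then $\rho_{\mathit{TSD}_k}(\mathrm{proj}(sh_1,V))=\rho_{\mathit{TSD}_k}(\mathrm{proj}(sh_2,V))$.
   Context: $\mathit{SG}=\wp(\mathit{VI})\setminus\{\emptyset\}$, $\mathit{SH}=\wp(\mathit{SG})$. $\rho_{\mathit{TSD}_k}(sh)=\{\,S\in\mathit{SG}\mid \forall T\subseteq S:\ \#T<k\implies S=\bigcup\{U\in sh\mid T\subseteq U\subseteq S\}\,\}$. $\mathrm{proj}(sh,V)=\{S\cap V\mid S\in sh, S\cap V\ne\emptyset\}\cup\{\{x\}\mid x\in\mathit{VI}\setminus V\}$. *)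

theory Defs
  imports Main
begin

definition SG :: "'a set \<Rightarrow> 'a set set" where
  "SG VI = Pow VI - {{}}"

definition SH :: "'a set \<Rightarrow> 'a set set set" where
  "SH VI = Pow (SG VI)"

definition rho_TSD :: "'a set \<Rightarrow> nat \<Rightarrow> 'a set set \<Rightarrow> 'a set set" where
  "rho_TSD VI k sh = {S \<in> SG VI. \<forall>T. T \<subseteq> S \<longrightarrow> card T < k \<longrightarrow>
      S = \<Union>{U \<in> sh. T \<subseteq> U \<and> U \<subseteq> S}}"

definition proj :: "'a set \<Rightarrow> 'a set set \<Rightarrow> 'a set \<Rightarrow> 'a set set" where
  "proj VI sh V = {S \<inter> V | S. S \<in> sh \<and> S \<inter> V \<noteq> {}} \<union> {{x} | x. x \<in> VI - V}"

end

theory Submission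
  imports Defs
begin

text \<open>
  \<open>rho_TSD VI k\<close> is a closure operator on sets of sharing groups (monotone, idempotent, and
  extensive on subsets of \<open>SG VI\<close>), and projecting a closed set lands inside the closure of
  the projection, \<open>proj (rho_TSD A) \<subseteq> rho_TSD (proj A)\<close>: a witness \<open>U \<in> A\<close> with
  \<open>T \<subseteq> U \<subseteq> S\<close> projects to the witness \<open>U \<inter> V\<close> for \<open>T \<subseteq> S \<inter> V\<close>. Hence
  \<open>rho_TSD (proj A) = rho_TSD (proj (rho_TSD A))\<close> depends on \<open>A\<close> only through
  \<open>rho_TSD A\<close>.
\<close>

lemma rho_TSD_memI:
  assumes "S \<in> SG VI"
    and "\<And>T x. T \<subseteq> S \<Longrightarrow> card T < k \<Longrightarrow> x \<in> S \<Longrightarrow> \<exists>U\<in>A. T \<subseteq> U \<and> U \<subseteq> S \<and> x \<in> U"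
  shows "S \<in> rho_TSD VI k A"
proof -
  have "S = \<Union>{U \<in> A. T \<subseteq> U \<and> U \<subseteq> S}" if "T \<subseteq> S" "card T < k" for T
  proof
    show "S \<subseteq> \<Union>{U \<in> A. T \<subseteq> U \<and> U \<subseteq> S}"
      using assms(2)[OF that] by blast
  qed blast
  then show ?thesis
    using assms(1) unfolding rho_TSD_def by blast
qed

lemma rho_TSD_subset_SG: "rho_TSD VI k A \<subseteq> SG VI"
  unfolding rho_TSD_def by blast

lemma rho_TSD_memD:
  assumes "S \<in> rho_TSD VI k A" "T \<subseteq> S" "card T < k" "x \<in> S"
  shows "\<exists>U\<in>A. T \<subseteq> U \<and> U \<subseteq> S \<and> x \<in> U"
proof -
  have "S = \<Union>{U \<in> A. T \<subseteq> U \<and> U \<subseteq> S}"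
    using assms(1-3) unfolding rho_TSD_def by simp
  with assms(4) have "x \<in> \<Union>{U \<in> A. T \<subseteq> U \<and> U \<subseteq> S}"
    by simp
  then show ?thesis
    by blast
qed

lemma rho_TSD_mono:
  assumes "A \<subseteq> B"
  shows "rho_TSD VI k A \<subseteq> rho_TSD VI k B"
proof
  fix S assume S: "S \<in> rho_TSD VI k A"
  show "S \<in> rho_TSD VI k B"
  proof (rule rho_TSD_memI)
    show "S \<in> SG VI"
      using S rho_TSD_subset_SG by blast
    fix T x assume "T \<subseteq> S" "card T < k" "x \<in> S"
    then obtain U where "U \<in> A" "T \<subseteq> U" "U \<subseteq> S" "x \<in> U"
      using rho_TSD_memD[OF S] by blast
    with assms show "\<exists>U\<in>B. T \<subseteq> U \<and> U \<subseteq> S \<and> x \<in> U"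
      by blast
  qed
qed

lemma mem_rho_TSD_if_mem: "S \<in> A \<Longrightarrow> S \<in> SG VI \<Longrightarrow> S \<in> rho_TSD VI k A"
  by (rule rho_TSD_memI) blast+

lemma subset_rho_TSD: "A \<subseteq> SG VI \<Longrightarrow> A \<subseteq> rho_TSD VI k A"
  by (blast intro: mem_rho_TSD_if_mem)

lemma rho_TSD_idem: "rho_TSD VI k (rho_TSD VI k A) = rho_TSD VI k A"
proof
  show "rho_TSD VI k (rho_TSD VI k A) \<subseteq> rho_TSD VI k A"
  proof
    fix S assume S: "S \<in> rho_TSD VI k (rho_TSD VI k A)"
    show "S \<in> rho_TSD VI k A"
    proof (rule rho_TSD_memI)
      show "S \<in> SG VI"
        using S rho_TSD_subset_SG by blast
      fix T x assume T: "T \<subseteq> S" "card T < k" "x \<in> S"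
      then obtain U where U: "U \<in> rho_TSD VI k A" "T \<subseteq> U" "U \<subseteq> S" "x \<in> U"
        using rho_TSD_memD[OF S] by blast
      then obtain W where "W \<in> A" "T \<subseteq> W" "W \<subseteq> U" "x \<in> W"
        using rho_TSD_memD[OF U(1) _ T(2)] by blast
      with U(3) show "\<exists>W\<in>A. T \<subseteq> W \<and> W \<subseteq> S \<and> x \<in> W"
        by blast
    qed
  qed
  show "rho_TSD VI k A \<subseteq> rho_TSD VI k (rho_TSD VI k A)"
    by (rule subset_rho_TSD[OF rho_TSD_subset_SG])
qed

lemma proj_mono: "A \<subseteq> B \<Longrightarrow> proj VI A V \<subseteq> proj VI B V"
  unfolding proj_def by blast

lemma Int_mem_proj: "S \<in> A \<Longrightarrow> S \<inter> V \<noteq> {} \<Longrightarrow> S \<inter> V \<in> proj VI A V"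
  unfolding proj_def by blast

lemma proj_subset_SG: "A \<subseteq> SG VI \<Longrightarrow> proj VI A V \<subseteq> SG VI"
  unfolding proj_def SG_def by blast

lemma proj_rho_TSD_subset: "proj VI (rho_TSD VI k A) V \<subseteq> rho_TSD VI k (proj VI A V)"
proof
  fix X assume X: "X \<in> proj VI (rho_TSD VI k A) V"
  then consider x where "x \<in> VI - V" "X = {x}"
    | S where "S \<in> rho_TSD VI k A" "X = S \<inter> V" "X \<noteq> {}"
    unfolding proj_def by blast
  then show "X \<in> rho_TSD VI k (proj VI A V)"
  proof cases
    case 1
    then show ?thesis
      by (intro mem_rho_TSD_if_mem) (auto simp: proj_def SG_def)
  next
    case (2 S)
    show ?thesis
      unfolding \<open>X = S \<inter> V\<close>
    proof (rule rho_TSD_memI)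
      show "S \<inter> V \<in> SG VI"
        using 2 rho_TSD_subset_SG unfolding SG_def by blast
      fix T x assume T: "T \<subseteq> S \<inter> V" "card T < k" "x \<in> S \<inter> V"
      then obtain W where W: "W \<in> A" "T \<subseteq> W" "W \<subseteq> S" "x \<in> W"
        using rho_TSD_memD[OF 2(1), of T x] by blast
      have "W \<inter> V \<in> proj VI A V"
        using W(1,4) T(3) by (blast intro: Int_mem_proj)
      moreover have "T \<subseteq> W \<inter> V" "W \<inter> V \<subseteq> S \<inter> V" "x \<in> W \<inter> V"
        using W T by auto
      ultimately show "\<exists>U\<in>proj VI A V. T \<subseteq> U \<and> U \<subseteq> S \<inter> V \<and> x \<in> U"
        by blast
    qed
  qed
qed

lemma rho_TSD_proj_rho_TSD:
  assumes "A \<subseteq> SG VI"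
  shows "rho_TSD VI k (proj VI (rho_TSD VI k A) V) = rho_TSD VI k (proj VI A V)"
proof
  have "rho_TSD VI k (proj VI (rho_TSD VI k A) V) \<subseteq> rho_TSD VI k (rho_TSD VI k (proj VI A V))"
    by (intro rho_TSD_mono proj_rho_TSD_subset)
  then show "rho_TSD VI k (proj VI (rho_TSD VI k A) V) \<subseteq> rho_TSD VI k (proj VI A V)"
    by (simp only: rho_TSD_idem)
  show "rho_TSD VI k (proj VI A V) \<subseteq> rho_TSD VI k (proj VI (rho_TSD VI k A) V)"
    by (intro rho_TSD_mono proj_mono subset_rho_TSD assms)
qed

theorem lemma3p22:
  fixes VI :: "'a set" and n k :: nat and sh1 sh2 :: "'a set set" and V :: "'a set"
  assumes "finite VI" and "card VI = n" and "1 \<le> k" and "k \<le> n"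
    and "sh1 \<in> SH VI" and "sh2 \<in> SH VI" and "V \<subseteq> VI"
    and "rho_TSD VI k sh1 = rho_TSD VI k sh2"
  shows "rho_TSD VI k (proj VI sh1 V) = rho_TSD VI k (proj VI sh2 V)"
proof -
  have sh: "sh1 \<subseteq> SG VI" "sh2 \<subseteq> SG VI"
    using assms(5,6) unfolding SH_def by auto
  have "rho_TSD VI k (proj VI sh1 V) = rho_TSD VI k (proj VI (rho_TSD VI k sh1) V)"
    using rho_TSD_proj_rho_TSD[OF sh(1)] by simp
  also have "\<dots> = rho_TSD VI k (proj VI (rho_TSD VI k sh2) V)"
    using assms(8) by simp
  also have "\<dots> = rho_TSD VI k (proj VI sh2 V)"
    by (rule rho_TSD_proj_rho_TSD[OF sh(2)])
  finally show ?thesis .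
qed

end
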